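(* Let $p_1,\dots,p_n\ge0$, unit vectors $\vec a_1,\dots,\vec a_n\in\mathbb{R}^3$ with $\sum_ip_i=2$, $\sum_ip_i\vec a_i=\vec0$, and let $A^{1/2}_i=\frac{p_i}{2}\big(\mathds{1}+\tfrac12\vec a_i\cdot\vec\sigma\big)$. Let $f(\vec x)=\sum_ip_i\Theta(\vec x\cdot\vec a_i)$ and suppose (in the given coordinates) $f(\vec v_{s_xs_ys_z})\le1$ for all $(s_x,s_y,s_z)\in\{\pm1\}^3$. Define $$\alpha_i=\frac{p_i}{2}\Big(1-\frac14\sum_{s_x,s_y,s_z=\pm1}\Theta(\vec a_i\cdot\vec v_{s_xs_ys_z})\Big),$$ and for $\vec\lambda\in S_2$ with $s_k=\mathrm{sgn}(\lambda_k)$, $$p(i|\vec\lambda)=p_i\,\Theta(\vec a_i\cdot\vec v_{s_xs_ys_z})+\frac{(1-f(\vec v_{s_xs_ys_z}))\,\alpha_i}{\sum_j\alpha_j}$$ (with the second term taken to be $0$ if $\sum_j\alpha_j=0$). Then $\alpha_i\ge0$ for all $i$, $p(i|\vec\lambda)\ge0$, $\sum_ip(i|\vec\lambda)=1$ for all $\vec\lambda$, and $$\int_{S_2}p(i|\vec\lambda)\,\frac{1}{4\pi}(\mathds{1}+\vec\lambda\cdot\vec\sigma)\,\mathrm{d}\vec\lambda=A^{1/2}_i\quad\text{for all } i.$$ Moreover, $\sum_{s_x,s_y,s_z=\pm1}p_i\,\Theta(\vec a_i\cdot\vec v_{s_xs_ys_z})\,G_{s_xs_ys_z}=A^{1/2}_i-\alpha_i\mathds{1}$,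 where $G_{s_xs_ys_z}=\frac{\mathds{1}}{8}+\frac{\vec v_{s_xs_ys_z}\cdot\vec\sigma}{16}$.
   Context: $\Theta(x)=x$ for $x\ge0$ and $0$ for $x<0$; $\mathrm{sgn}(x)=+1$ if $x\ge0$ and $-1$ if $x<0$; $\vec v_{s_xs_ys_z}=(s_x,s_y,s_z)^T$; $\vec\sigma$ the Pauli vector; $S_2$ the unit sphere in $\mathbb{R}^3$ with surface measure $\mathrm{d}\vec\lambda$ of total mass $4\pi$. *)

theory Defs
  imports "HOL-Analysis.Analysis"
begin

definition Theta :: "real \<Rightarrow> real" where
  "Theta x = (if x \<ge> 0 then x else 0)"

text \<open>sgn with the convention sgn(0) = +1.\<close>
definition sgnp :: "real \<Rightarrow> real" where
  "sgnp x = (if x \<ge> 0 then 1 else -1)"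

definition vs :: "real \<Rightarrow> real \<Rightarrow> real \<Rightarrow> real^3" where
  "vs sx sy sz = vector [sx, sy, sz]"

definition sgnvec :: "real^3 \<Rightarrow> real^3" where
  "sgnvec l = vs (sgnp (l$1)) (sgnp (l$2)) (sgnp (l$3))"

definition pauli_x :: "complex^2^2" where
  "pauli_x = vector [vector [0, 1], vector [1, 0]]"
definition pauli_y :: "complex^2^2" where
  "pauli_y = vector [vector [0, -\<i>], vector [\<i>, 0]]"
definition pauli_z :: "complex^2^2" where
  "pauli_z = vector [vector [1, 0], vector [0, -1]]"

definition pauli_dot :: "real^3 \<Rightarrow> complex^2^2" where
  "pauli_dot x = (x$1) *\<^sub>R pauli_x + (x$2) *\<^sub>R pauli_y + (x$3) *\<^sub>R pauli_z"

definition id2 :: "complex^2^2" where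
  "id2 = mat 1"

text \<open>Surface measure on the unit sphere S_2 in R^3 (total mass 4 pi), realised as the
  cone measure: 3 times the push-forward of Lebesgue measure on the punctured unit ball
  under radial projection x \<mapsto> x/|x|.\<close>
definition S2_measure :: "(real^3) measure" where
  "S2_measure = density (distr (restrict_space lborel (ball 0 1 - {0})) borel
                           (\<lambda>x. x /\<^sub>R norm x)) (\<lambda>_. 3)"

definition sum_signs :: "(real \<Rightarrow> real \<Rightarrow> real \<Rightarrow> 'b::comm_monoid_add) \<Rightarrow> 'b" where
  "sum_signs g = (\<Sum>sx\<in>{-1,1::real}. \<Sum>sy\<in>{-1,1::real}. \<Sum>sz\<in>{-1,1::real}. g sx sy sz)"

definition f_fun :: "nat \<Rightarrow> (nat \<Rightarrow> real) \<Rightarrow> (nat \<Rightarrow> real^3) \<Rightarrow> real^3 \<Rightarrow> real" where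
  "f_fun n p a x = (\<Sum>i<n. p i * Theta (x \<bullet> a i))"

definition alpha :: "(nat \<Rightarrow> real) \<Rightarrow> (nat \<Rightarrow> real^3) \<Rightarrow> nat \<Rightarrow> real" where
  "alpha p a i = p i / 2 * (1 - 1/4 * sum_signs (\<lambda>sx sy sz. Theta (a i \<bullet> vs sx sy sz)))"

definition pcond :: "nat \<Rightarrow> (nat \<Rightarrow> real) \<Rightarrow> (nat \<Rightarrow> real^3) \<Rightarrow> nat \<Rightarrow> real^3 \<Rightarrow> real" where
  "pcond n p a i l =
     (let v = sgnvec l; S = (\<Sum>j<n. alpha p a j) in
      p i * Theta (a i \<bullet> v) + (if S = 0 then 0 else (1 - f_fun n p a v) * alpha p a i / S))"

definition A_half :: "(nat \<Rightarrow> real) \<Rightarrow> (nat \<Rightarrow> real^3) \<Rightarrow> nat \<Rightarrow> complex^2^2" where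
  "A_half p a i = (p i / 2) *\<^sub>R (id2 + (1/2) *\<^sub>R pauli_dot (a i))"

definition G :: "real \<Rightarrow> real \<Rightarrow> real \<Rightarrow> complex^2^2" where
  "G sx sy sz = (1/8) *\<^sub>R id2 + (1/16) *\<^sub>R pauli_dot (vs sx sy sz)"

end

theory Submission
  imports Defs
begin

text \<open>
  The response function \<open>p(i|\<lambda>)\<close> depends on \<open>\<lambda>\<close> only through its octant, so the
  integral over \<open>S\<^sub>2\<close> reduces to a sum over the eight sign vectors \<open>v\<^sub>s\<close>: the kernel
  \<open>(\<one> + \<lambda>\<cdot>\<sigma>)/4\<pi>\<close> integrates over an octant to \<open>G\<^sub>s\<close>, because an octant has area \<open>\<pi>/2\<close>
  and first moment \<open>(\<pi>/4) v\<^sub>s\<close>. With \<open>S\<^sub>2\<close> given as a cone measure, these values come from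
  \<open>vol(B)/8\<close> and, for the first moment, from \<open>\<integral>\<^sub>B |x\<^sub>k| = \<pi>/2\<close> (Fubini) together with the
  layer-cake identity \<open>\<integral>\<^sub>B |x| g = (3/4) \<integral>\<^sub>B g\<close> for \<open>g\<close> constant along rays.

  The finite sums rest on two facts about a vector \<open>u\<close>, obtained by pairing antipodal vertices
  (\<open>\<Theta>(t) - \<Theta>(-t) = t\<close>, \<open>\<Theta>(t) + \<Theta>(-t) = |t|\<close>): \<open>\<Sigma>\<^sub>s \<Theta>(u\<cdot>v\<^sub>s) v\<^sub>s = 4u\<close>, which with
  \<open>\<Sigma>\<^sub>i p\<^sub>i a\<^sub>i = 0\<close> kills the Bloch component of the redistributed deficit \<open>1 - f(v\<^sub>s)\<close>; and
  \<open>\<Sigma>\<^sub>s \<Theta>(u\<cdot>v\<^sub>s) \<le> 4\<close> for unit \<open>u\<close> (Cauchy-Schwarz over four vertices), which is \<open>\<alpha>\<^sub>i \<ge> 0\<close>.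
\<close>

lemma sum_signs_expand:
  "sum_signs g = g 1 1 1 + g 1 1 (-1) + g 1 (-1) 1 + g 1 (-1) (-1)
     + g (-1) 1 1 + g (-1) 1 (-1) + g (-1) (-1) 1 + g (-1) (-1) (-1)"
  by (simp add: sum_signs_def algebra_simps)

lemma sum_signs_cong:
  "(\<And>x y z. x \<in> {-1,1} \<Longrightarrow> y \<in> {-1,1} \<Longrightarrow> z \<in> {-1,1} \<Longrightarrow> f x y z = g x y z) \<Longrightarrow> sum_signs f = sum_signs g"
  by (simp add: sum_signs_def)

lemma sum_signs_add: "sum_signs (\<lambda>x y z. f x y z + g x y z) = sum_signs f + sum_signs g"
  by (simp add: sum_signs_def sum.distrib)

lemma sum_signs_diff: "sum_signs (\<lambda>x y z. f x y z - g x y z) = sum_signs f - (sum_signs g :: 'a :: ab_group_add)"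
  by (simp add: sum_signs_def sum_subtractf)

lemma sum_signs_linear:
  assumes "linear h"
  shows "sum_signs (\<lambda>x y z. h (g x y z)) = h (sum_signs g)"
  by (simp only: sum_signs_def linear_sum[OF assms])

lemma sum_signs_scaleR_right:
  "sum_signs (\<lambda>x y z. c *\<^sub>R g x y z) = c *\<^sub>R sum_signs (g :: _ \<Rightarrow> _ \<Rightarrow> _ \<Rightarrow> 'a :: real_vector)"
  by (simp only: sum_signs_def scaleR_sum_right)

lemma sum_signs_mult_left: "sum_signs (\<lambda>x y z. c * g x y z) = c * sum_signs (g :: _ \<Rightarrow> _ \<Rightarrow> _ \<Rightarrow> 'a :: semiring_0)"
  by (simp only: sum_signs_def sum_distrib_left)

lemma sum_signs_mult_right: "sum_signs (\<lambda>x y z. f x y z * c) = sum_signs f * (c :: 'a :: semiring_0)"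
  by (simp only: sum_signs_def sum_distrib_right)

lemma sum_signs_swap_sum: "sum_signs (\<lambda>x y z. \<Sum>i\<in>I. g i x y z) = (\<Sum>i\<in>I. sum_signs (g i))"
  by (simp add: sum_signs_def sum.distrib)

lemma sum_signs_const [simp]: "sum_signs (\<lambda>x y z. c) = 8 * (c :: 'a :: comm_semiring_1)"
  by (simp add: sum_signs_def sum_constant algebra_simps)

lemma sum_signs_vs [simp]: "sum_signs vs = 0"
  by (simp add: sum_signs_expand vec_eq_iff forall_3 vs_def)

lemma has_bochner_integral_sum_signs:
  fixes f :: "real \<Rightarrow> real \<Rightarrow> real \<Rightarrow> 'a \<Rightarrow> 'b::{banach, second_countable_topology}"
  assumes "\<And>x y z. x \<in> {-1,1} \<Longrightarrow> y \<in> {-1,1} \<Longrightarrow> z \<in> {-1,1} \<Longrightarrow>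
             has_bochner_integral M (f x y z) (v x y z)"
  shows "has_bochner_integral M (\<lambda>l. sum_signs (\<lambda>x y z. f x y z l)) (sum_signs v)"
  unfolding sum_signs_expand by (intro has_bochner_integral_add assms) auto

lemma nn_integral_sum_signs:
  assumes "\<And>a b c. f a b c \<in> borel_measurable M"
  shows "(\<integral>\<^sup>+x. sum_signs (\<lambda>a b c. f a b c x) \<partial>M) = sum_signs (\<lambda>a b c. \<integral>\<^sup>+x. f a b c x \<partial>M)"
  unfolding sum_signs_def using assms
  by (simp add: nn_integral_sum borel_measurable_sum del: sum.insert)

lemma vs_nth [simp]: "vs x y z $ 1 = x" "vs x y z $ 2 = y" "vs x y z $ 3 = z"
  by (simp_all add: vs_def)

lemma inner_vs: "u \<bullet> vs x y z = u$1 * x + u$2 * y + u$3 * z"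
  by (simp add: vs_def inner_vec_def sum_3)

lemma vs_uminus: "vs (-x) (-y) (-z) = - vs x y z"
  by (simp add: vec_eq_iff forall_3)

lemma Theta_nonneg: "Theta t \<ge> 0"
  by (simp add: Theta_def)

lemma Theta_minus: "Theta (-t) = Theta t - t"
  by (simp add: Theta_def)

lemma sum_signs_Theta_inner_scaleR:
  "sum_signs (\<lambda>x y z. Theta (u \<bullet> vs x y z) *\<^sub>R vs x y z) = 4 *\<^sub>R u"
proof -
  let ?h = "\<lambda>v. Theta (u \<bullet> v) *\<^sub>R v + Theta (u \<bullet> - v) *\<^sub>R - v"
  have pair: "?h v = (u \<bullet> v) *\<^sub>R v" for v
    by (simp add: Theta_minus algebra_simps)
  have "sum_signs (\<lambda>x y z. Theta (u \<bullet> vs x y z) *\<^sub>R vs x y z)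
      = ?h (vs 1 1 1) + ?h (vs 1 1 (-1)) + ?h (vs 1 (-1) 1) + ?h (vs 1 (-1) (-1))"
    by (simp add: sum_signs_expand vs_uminus[symmetric] algebra_simps)
  also have "\<dots> = 4 *\<^sub>R u"
    unfolding pair by (simp add: inner_vs vec_eq_iff forall_3 algebra_simps)
  finally show ?thesis .
qed

lemma Theta_add_Theta_minus: "Theta t + Theta (-t) = \<bar>t\<bar>"
  by (simp add: Theta_def)

lemma sum_abs_le_of_sum_squares_4:
  fixes t1 t2 t3 t4 :: real
  assumes "t1\<^sup>2 + t2\<^sup>2 + t3\<^sup>2 + t4\<^sup>2 = 4"
  shows "\<bar>t1\<bar> + \<bar>t2\<bar> + \<bar>t3\<bar> + \<bar>t4\<bar> \<le> 4"
proof -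
  have "(\<bar>t1\<bar> + \<bar>t2\<bar> + \<bar>t3\<bar> + \<bar>t4\<bar>)\<^sup>2 \<le> (t1\<^sup>2 + t2\<^sup>2 + t3\<^sup>2 + t4\<^sup>2) * 4"
    using sum_squared_le_sum_of_squares[of "\<lambda>i. \<bar>[t1, t2, t3, t4] ! i\<bar>" "{..<4}"]
    by (simp add: eval_nat_numeral add.assoc)
  with assms have "(\<bar>t1\<bar> + \<bar>t2\<bar> + \<bar>t3\<bar> + \<bar>t4\<bar>)\<^sup>2 \<le> 4\<^sup>2"
    by simp
  then show ?thesis
    by (rule power2_le_imp_le) simp
qed

lemma sum_signs_Theta_inner_le:
  assumes "norm u = 1"
  shows "sum_signs (\<lambda>x y z. Theta (u \<bullet> vs x y z)) \<le> 4"
proof -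
  let ?h = "\<lambda>v. Theta (u \<bullet> v) + Theta (u \<bullet> - v)"
  have "sum_signs (\<lambda>x y z. Theta (u \<bullet> vs x y z))
      = ?h (vs 1 1 1) + ?h (vs 1 1 (-1)) + ?h (vs 1 (-1) 1) + ?h (vs 1 (-1) (-1))"
    by (simp add: sum_signs_expand vs_uminus[symmetric] algebra_simps)
  also have "\<dots> = \<bar>u \<bullet> vs 1 1 1\<bar> + \<bar>u \<bullet> vs 1 1 (-1)\<bar> + \<bar>u \<bullet> vs 1 (-1) 1\<bar> + \<bar>u \<bullet> vs 1 (-1) (-1)\<bar>"
    by (simp only: inner_minus_right Theta_add_Theta_minus)
  also have "\<dots> \<le> 4"
  proof (rule sum_abs_le_of_sum_squares_4)
    have "(u$1)\<^sup>2 + (u$2)\<^sup>2 + (u$3)\<^sup>2 = 1"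
      using assms by (simp add: norm_vec_def L2_set_def sum_3)
    then show "(u \<bullet> vs 1 1 1)\<^sup>2 + (u \<bullet> vs 1 1 (-1))\<^sup>2 + (u \<bullet> vs 1 (-1) 1)\<^sup>2 + (u \<bullet> vs 1 (-1) (-1))\<^sup>2 = 4"
      by (simp add: inner_vs power2_eq_square algebra_simps)
  qed
  finally show ?thesis .
qed

lemma linear_pauli_dot: "linear pauli_dot"
  by (rule linearI) (simp_all add: pauli_dot_def algebra_simps)

lemma sum_signs_scaleR_G:
  "sum_signs (\<lambda>x y z. c x y z *\<^sub>R G x y z)
     = (sum_signs c / 8) *\<^sub>R id2 + (1/16) *\<^sub>R pauli_dot (sum_signs (\<lambda>x y z. c x y z *\<^sub>R vs x y z))"
proof -
  have lin: "linear (\<lambda>t. (t / 8) *\<^sub>R id2)" "linear (\<lambda>w. (1/16) *\<^sub>R pauli_dot w)"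
    by (auto intro!: linearI simp: linear_add[OF linear_pauli_dot]
        linear_scale[OF linear_pauli_dot] algebra_simps add_divide_distrib)
  have "c x y z *\<^sub>R G x y z
      = (c x y z / 8) *\<^sub>R id2 + (1/16) *\<^sub>R pauli_dot (c x y z *\<^sub>R vs x y z)" for x y z
    by (simp add: G_def linear_scale[OF linear_pauli_dot] algebra_simps)
  then show ?thesis
    using sum_signs_linear[OF lin(1), of c]
      sum_signs_linear[OF lin(2), of "\<lambda>x y z. c x y z *\<^sub>R vs x y z"]
    by (simp add: sum_signs_add)
qed

lemma sum_signs_Theta_scaleR_G:
  "sum_signs (\<lambda>x y z. (p i * Theta (a i \<bullet> vs x y z)) *\<^sub>R G x y z) = A_half p a i - alpha p a i *\<^sub>R id2"
proof -
  let ?T = "\<lambda>x y z. Theta (a i \<bullet> vs x y z)"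
  have "sum_signs (\<lambda>x y z. (p i * ?T x y z) *\<^sub>R vs x y z) = (4 * p i) *\<^sub>R a i"
    using sum_signs_scaleR_right[of "p i" "\<lambda>x y z. ?T x y z *\<^sub>R vs x y z"]
    by (simp add: sum_signs_Theta_inner_scaleR)
  then show ?thesis
    by (simp add: sum_signs_scaleR_G sum_signs_mult_left A_half_def alpha_def
        linear_scale[OF linear_pauli_dot] algebra_simps)
qed

section \<open>Sign flips and octants\<close>

definition sign_vectors :: "(real^'n) set" where
  "sign_vectors = {s. \<forall>i. s$i \<in> {-1,1}}"

lemma abs_nth_sign_vector: "s \<in> sign_vectors \<Longrightarrow> \<bar>s$i\<bar> = 1"
  by (auto simp: sign_vectors_def dest: spec[of _ i])

lemma vs_in_sign_vectors: "x \<in> {-1,1} \<Longrightarrow> y \<in> {-1,1} \<Longrightarrow> z \<in> {-1,1} \<Longrightarrow> vs x y z \<in> sign_vectors"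
  by (simp add: sign_vectors_def forall_3)

definition sign_flip :: "real^'n \<Rightarrow> real^'n \<Rightarrow> real^'n" where
  "sign_flip s x = (\<chi> i. s$i * x$i)"

lemma sign_flip_nth [simp]: "sign_flip s x $ i = s$i * x$i"
  by (simp add: sign_flip_def)

lemma borel_measurable_sign_flip [measurable]: "sign_flip s \<in> borel_measurable borel"
  unfolding sign_flip_def by (intro borel_measurable_continuous_onI continuous_on_vec_lambda continuous_intros)

lemma norm_sign_flip: "s \<in> sign_vectors \<Longrightarrow> norm (sign_flip s x) = norm x"
  unfolding norm_vec_def L2_set_def by (simp add: abs_mult abs_nth_sign_vector)

lemma distr_lborel_sign_flip:
  fixes s :: "real^'n"
  assumes s: "s \<in> sign_vectors"
  shows "distr lborel borel (sign_flip s) = lborel"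
proof -
  define c where "c j = s \<bullet> j" for j :: "real^'n"
  have c_axis: "c (axis i 1) = s$i" for i
    by (simp add: c_def cart_eq_inner_axis inner_commute)
  have flip: "(\<lambda>x. \<Sum>j\<in>Basis. (c j * (x \<bullet> j)) *\<^sub>R j) = sign_flip s"
  proof
    fix x :: "real^'n"
    have "(\<Sum>j\<in>Basis. (c j * (x \<bullet> j)) *\<^sub>R j) $ i = s$i * x$i" for i
      by (simp add: cart_eq_inner_axis inner_sum_left_Basis axis_in_Basis_iff c_axis)
    then show "(\<Sum>j\<in>Basis. (c j * (x \<bullet> j)) *\<^sub>R j) = sign_flip s x"
      by (simp add: vec_eq_iff)
  qed
  have c_abs: "\<bar>c j\<bar> = 1" if "j \<in> Basis" for j
    using that abs_nth_sign_vector[OF s] by (auto simp: Basis_vec_def c_axis)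
  have "lborel = density (distr lborel borel (\<lambda>x. 0 + (\<Sum>j\<in>Basis. (c j * (x \<bullet> j)) *\<^sub>R j)))
      (\<lambda>_. ennreal (\<Prod>j\<in>Basis. \<bar>c j\<bar>))"
    by (rule lborel_affine_euclidean) (use c_abs in fastforce)
  then show ?thesis
    by (simp add: flip c_abs density_1)
qed

lemma AE_lborel_nonzero_nth: "AE x in lborel. \<forall>i. (x::real^'n)$i \<noteq> 0"
proof (intro eventually_all_finite)
  fix i
  show "AE x in lborel. (x::real^'n)$i \<noteq> 0"
    using AE_lborel_inner_neq[of "axis i 1 :: real^'n" 0] by (simp add: axis_in_Basis_iff Basis_real_def cart_eq_inner_axis)
qed

lemma sgnvec_nth: "sgnvec l $ i = sgnp (l$i)"
  using exhaust_3[of i] by (auto simp: sgnvec_def)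

lemma sgnp_in: "sgnp t \<in> {-1,1}"
  by (simp add: sgnp_def)

lemma sgnvec_vs: "x \<in> {-1,1} \<Longrightarrow> y \<in> {-1,1} \<Longrightarrow> z \<in> {-1,1} \<Longrightarrow> sgnvec (vs x y z) = vs x y z"
  by (auto simp: sgnvec_def sgnp_def)

definition octant :: "real^3 \<Rightarrow> (real^3) set" where
  "octant s = {l. sgnvec l = s}"

lemma mem_octant: "l \<in> octant s \<longleftrightarrow> (\<forall>i. sgnp (l$i) = s$i)"
  by (simp add: octant_def vec_eq_iff sgnvec_nth)

lemma borel_measurable_sgnp [measurable]: "sgnp \<in> borel_measurable borel"
  unfolding sgnp_def by measurable

lemma sets_octant [measurable]: "octant s \<in> sets borel"
proof -
  have "octant s = (\<Inter>i. {l. sgnp (l$i) = s$i})"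
    by (auto simp: mem_octant)
  also have "\<dots> \<in> sets borel"
    by measurable
  finally show ?thesis .
qed

lemma sum_signs_indicator_octant_scaleR:
  fixes F :: "real \<Rightarrow> real \<Rightarrow> real \<Rightarrow> 'a::real_vector"
  shows "sum_signs (\<lambda>x y z. indicator (octant (vs x y z)) l *\<^sub>R F x y z) = F (sgnp (l$1)) (sgnp (l$2)) (sgnp (l$3))"
  by (cases "l$1 \<ge> 0"; cases "l$2 \<ge> 0"; cases "l$3 \<ge> 0")
    (simp_all add: sum_signs_expand indicator_def mem_octant forall_3 sgnp_def)

lemma sum_signs_indicator_octant:
  "sum_signs (\<lambda>x y z. indicator (octant (vs x y z)) l) = (1 :: 'a :: {comm_monoid_add, zero_neq_one})"
  by (cases "l$1 \<ge> 0"; cases "l$2 \<ge> 0"; cases "l$3 \<ge> 0")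
    (simp_all add: sum_signs_expand indicator_def mem_octant forall_3 sgnp_def)

lemma sign_flip_mem_octant:
  assumes t: "t \<in> sign_vectors" and x: "\<forall>i. x$i \<noteq> 0"
  shows "sign_flip t x \<in> octant s \<longleftrightarrow> x \<in> octant (sign_flip t s)"
proof -
  have "sgnp (t$i * x$i) = s$i \<longleftrightarrow> sgnp (x$i) = t$i * s$i" for i
  proof -
    have "t$i = 1 \<or> t$i = -1" "x$i \<noteq> 0"
      using t x by (auto simp: sign_vectors_def)
    then show ?thesis
      by (elim disjE) (auto simp: sgnp_def)
  qed
  then show ?thesis
    by (simp add: mem_octant)
qed

lemma nn_integral_octant_eq:
  assumes s: "s \<in> sign_vectors" and s': "s' \<in> sign_vectors"
    and w [measurable]: "w \<in> borel_measurable borel"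
    and w_flip: "\<And>t x. t \<in> sign_vectors \<Longrightarrow> w (sign_flip t x) = w x"
  shows "(\<integral>\<^sup>+x. indicator (octant s) x * w x \<partial>lborel) = (\<integral>\<^sup>+x. indicator (octant s') x * w x \<partial>lborel)"
proof -
  define t where "t = sign_flip s s'"
  have "(s$i = 1 \<or> s$i = -1) \<and> (s'$i = 1 \<or> s'$i = -1)" for i
    using s s' by (auto simp: sign_vectors_def)
  then have "t$i \<in> {-1,1} \<and> t$i * s$i = s'$i" for i
    unfolding t_def sign_flip_nth by (metis insert_iff mult_1 mult_minus1 minus_minus)
  then have t: "t \<in> sign_vectors" and ts: "sign_flip t s = s'"
    by (simp_all add: sign_vectors_def vec_eq_iff)
  have "(\<integral>\<^sup>+x. indicator (octant s) x * w x \<partial>lborel)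
      = (\<integral>\<^sup>+x. indicator (octant s) (sign_flip t x) * w (sign_flip t x) \<partial>lborel)"
    by (subst distr_lborel_sign_flip[of t, symmetric])
      (simp_all add: t nn_integral_distr)
  also have "\<dots> = (\<integral>\<^sup>+x. indicator (octant s') x * w x \<partial>lborel)"
    using AE_lborel_nonzero_nth
    by (rule nn_integral_cong_AE[OF eventually_mono]) (simp add: indicator_def sign_flip_mem_octant[OF t] ts w_flip[OF t])
  finally show ?thesis .
qed

lemma nn_integral_octant:
  assumes s: "s \<in> sign_vectors"
    and w [measurable]: "w \<in> borel_measurable borel"
    and w_flip: "\<And>t x. t \<in> sign_vectors \<Longrightarrow> w (sign_flip t x) = w x"
  shows "8 * (\<integral>\<^sup>+x. indicator (octant s) x * w x \<partial>lborel) = (\<integral>\<^sup>+x. w x \<partial>lborel)"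
proof -
  have "(\<integral>\<^sup>+x. w x \<partial>lborel) = (\<integral>\<^sup>+x. sum_signs (\<lambda>a b c. indicator (octant (vs a b c)) x * w x) \<partial>lborel)"
    by (simp add: sum_signs_mult_right sum_signs_indicator_octant)
  also have "\<dots> = sum_signs (\<lambda>a b c. \<integral>\<^sup>+x. indicator (octant (vs a b c)) x * w x \<partial>lborel)"
    by (rule nn_integral_sum_signs) simp
  also have "\<dots> = sum_signs (\<lambda>a b c. \<integral>\<^sup>+x. indicator (octant s) x * w x \<partial>lborel)"
    unfolding sum_signs_def
    by (intro sum.cong refl nn_integral_octant_eq[OF _ s w w_flip] vs_in_sign_vectors) auto
  finally show ?thesis
    by simp
qed

section \<open>Integrals over the unit ball\<close>

lemma sets_cball [measurable]: "cball (x::'a::euclidean_space) r \<in> sets borel"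
  by simp

lemma nn_integral_cball_scale:
  fixes g :: "'a::euclidean_space \<Rightarrow> ennreal"
  assumes g [measurable]: "g \<in> borel_measurable borel"
    and hom: "\<And>c x. c > 0 \<Longrightarrow> g (c *\<^sub>R x) = g x" and t: "t > 0"
  shows "(\<integral>\<^sup>+x. indicator (cball 0 t) x * g x \<partial>lborel)
       = ennreal (t ^ DIM('a)) * (\<integral>\<^sup>+x. indicator (cball 0 1) x * g x \<partial>lborel)"
proof -
  have "(\<integral>\<^sup>+x. indicator (cball 0 t) x * g x \<partial>lborel)
      = (\<integral>\<^sup>+x. ennreal (t ^ DIM('a)) * (indicator (cball 0 t) (t *\<^sub>R x) * g (t *\<^sub>R x)) \<partial>lborel)"
    using t by (subst lborel_affine[of t 0]) (simp_all add: nn_integral_density nn_integral_distr)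

  also have "\<dots> = (\<integral>\<^sup>+x. ennreal (t ^ DIM('a)) * (indicator (cball 0 1) x * g x) \<partial>lborel)"
    using t by (intro nn_integral_cong) (simp add: hom indicator_def mem_cball_0)
  also have "\<dots> = ennreal (t ^ DIM('a)) * (\<integral>\<^sup>+x. indicator (cball 0 1) x * g x \<partial>lborel)"
    by (rule nn_integral_cmult) simp
  finally show ?thesis .
qed

lemma nn_integral_cball_minus_cball:
  fixes g :: "'a::euclidean_space \<Rightarrow> ennreal"
  assumes g [measurable]: "g \<in> borel_measurable borel"
    and hom: "\<And>c x. c > 0 \<Longrightarrow> g (c *\<^sub>R x) = g x"
    and P: "(\<integral>\<^sup>+x. indicator (cball 0 1) x * g x \<partial>lborel) = ennreal P" "P \<ge> 0"
    and t: "0 < t" "t \<le> 1"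
  shows "(\<integral>\<^sup>+x. indicator (cball 0 1 - cball 0 t) x * g x \<partial>lborel) = ennreal ((1 - t ^ DIM('a)) * P)"
proof -
  let ?Q = "\<integral>\<^sup>+x. indicator (cball 0 1 - cball 0 t) x * g x \<partial>lborel"
  have "ennreal (t ^ DIM('a) * P) = (\<integral>\<^sup>+x. indicator (cball 0 t) x * g x \<partial>lborel)"
    using t P by (simp add: nn_integral_cball_scale[OF g hom t(1)] ennreal_mult)
  then have "?Q + ennreal (t ^ DIM('a) * P) = ?Q + (\<integral>\<^sup>+x. indicator (cball 0 t) x * g x \<partial>lborel)"
    by simp
  also have "\<dots> = (\<integral>\<^sup>+x. indicator (cball 0 1 - cball 0 t) x * g x + indicator (cball 0 t) x * g x \<partial>lborel)"
    by (rule nn_integral_add[symmetric]) measurable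
  also have "\<dots> = ennreal P"
    unfolding P(1)[symmetric] using t by (intro nn_integral_cong) (simp add: indicator_def mem_cball_0)
  finally have sum: "?Q + ennreal (t ^ DIM('a) * P) = ennreal P" .
  have "?Q = ?Q + ennreal (t ^ DIM('a) * P) - ennreal (t ^ DIM('a) * P)"
    by simp
  also have "\<dots> = ennreal P - ennreal (t ^ DIM('a) * P)"
    by (simp only: sum)
  also have "\<dots> = ennreal ((1 - t ^ DIM('a)) * P)"
    using t P by (subst ennreal_minus) (auto simp: algebra_simps power_le_one mult_left_le_one_le)
  finally show ?thesis .
qed

lemma nn_integral_one_minus_power:
  assumes "P \<ge> 0"
  shows "(\<integral>\<^sup>+t\<in>{0..1}. ennreal ((1 - t ^ d) * P) \<partial>lborel) = ennreal (d / (d + 1) * P)"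
proof -
  have "(\<integral>\<^sup>+t\<in>{0..1}. ennreal ((1 - t ^ d) * P) \<partial>lborel)
      = ennreal ((P * 1 - P / Suc d * 1 ^ Suc d) - (P * 0 - P / Suc d * 0 ^ Suc d))"
  proof (rule nn_integral_FTC_Icc)
    fix t :: real
    assume "t \<in> {0..1}"
    then show "0 \<le> (1 - t ^ d) * P"
      using assms by (simp add: power_le_one)
    have "((\<lambda>t. P / Suc d * t ^ Suc d) has_real_derivative P / Suc d * (Suc d * t ^ d)) (at t)"
      using DERIV_pow[of "Suc d" t] by (intro DERIV_cmult) simp
    from DERIV_diff[OF DERIV_cmult_Id[of P] this]
    show "((\<lambda>t. P * t - P / Suc d * t ^ Suc d) has_real_derivative (1 - t ^ d) * P) (at t)"
      by (simp add: algebra_simps del: of_nat_Suc)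
  qed auto
  then show ?thesis
    by (simp add: field_simps)
qed

lemma nn_integral_cball_norm_gt:
  fixes g :: "'a::euclidean_space \<Rightarrow> ennreal"
  assumes g [measurable]: "g \<in> borel_measurable borel"
    and hom: "\<And>c x. c > 0 \<Longrightarrow> g (c *\<^sub>R x) = g x"
    and P: "(\<integral>\<^sup>+x. indicator (cball 0 1) x * g x \<partial>lborel) = ennreal P" "P \<ge> 0"
    and t: "t \<noteq> 0"
  shows "(\<integral>\<^sup>+x. indicator {0..<norm x} t * indicator (cball 0 1) x * g x \<partial>lborel)
       = ennreal (indicator {0..1} t * ((1 - t ^ DIM('a)) * P))"
proof (cases "0 < t \<and> t \<le> 1")
  case True
  then have "(\<integral>\<^sup>+x. indicator {0..<norm x} t * indicator (cball 0 1) x * g x \<partial>lborel)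
      = (\<integral>\<^sup>+x. indicator (cball 0 1 - cball 0 t) x * g x \<partial>lborel)"
    by (intro nn_integral_cong) (auto simp: indicator_def mem_cball_0)
  with True show ?thesis
    by (simp add: nn_integral_cball_minus_cball[OF g hom P])
next
  case False
  then have "indicator {0..<norm x} t * indicator (cball 0 1) x * g x = 0" for x :: 'a
    using t by (auto simp: indicator_def mem_cball_0)
  with False t show ?thesis
    by (auto simp: indicator_def simp del: mult_eq_0_iff)
qed

lemma nn_integral_cball_norm_mult:
  fixes g :: "'a::euclidean_space \<Rightarrow> ennreal"
  assumes g [measurable]: "g \<in> borel_measurable borel"
    and hom: "\<And>c x. c > 0 \<Longrightarrow> g (c *\<^sub>R x) = g x"
    and P: "(\<integral>\<^sup>+x. indicator (cball 0 1) x * g x \<partial>lborel) = ennreal P" "P \<ge> 0"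
  shows "(\<integral>\<^sup>+x. indicator (cball 0 1) x * ennreal (norm x) * g x \<partial>lborel)
       = ennreal (DIM('a) / (DIM('a) + 1) * P)"
proof -
  let ?F = "\<lambda>x t. indicator {0..<norm x} t * indicator (cball 0 1) x * g x"
  have [measurable]: "Measurable.pred (borel \<Otimes>\<^sub>M borel) (\<lambda>xt::'a \<times> real. snd xt \<in> {0..<norm (fst xt)})"
    by (simp add: atLeastLessThan_iff) measurable
  have "(\<integral>\<^sup>+x. indicator (cball 0 1) x * ennreal (norm x) * g x \<partial>lborel) = (\<integral>\<^sup>+x. \<integral>\<^sup>+t. ?F x t \<partial>lborel \<partial>lborel)"
  proof (rule nn_integral_cong)
    fix x :: 'a
    have "(\<integral>\<^sup>+t. ?F x t \<partial>lborel) = (\<integral>\<^sup>+t. indicator {0..<norm x} t \<partial>lborel) * (indicator (cball 0 1) x * g x)"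
      by (subst nn_integral_multc[symmetric]) (simp_all add: mult.assoc)
    then show "indicator (cball 0 1) x * ennreal (norm x) * g x = (\<integral>\<^sup>+t. ?F x t \<partial>lborel)"
      by (simp add: mult_ac)
  qed
  also have "\<dots> = (\<integral>\<^sup>+t. \<integral>\<^sup>+x. ?F x t \<partial>lborel \<partial>lborel)"
    by (rule lborel_pair.Fubini'[symmetric]) measurable
  also have "\<dots> = (\<integral>\<^sup>+t. ennreal (indicator {0..1} t * ((1 - t ^ DIM('a)) * P)) \<partial>lborel)"
    using AE_lborel_singleton[of 0]
    by (rule nn_integral_cong_AE[OF eventually_mono]) (rule nn_integral_cball_norm_gt[OF g hom P])
  also have "\<dots> = (\<integral>\<^sup>+t\<in>{0..1}. ennreal ((1 - t ^ DIM('a)) * P) \<partial>lborel)"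
    by (intro nn_integral_cong) (simp add: indicator_def)
  also have "\<dots> = ennreal (DIM('a) / (DIM('a) + 1) * P)"
    by (simp add: nn_integral_one_minus_power[OF P(2)] add.commute)
  finally show ?thesis .
qed

lemma nn_integral_abs_mult_one_minus_square:
  "(\<integral>\<^sup>+y. indicator {-1..1} y * ennreal (\<bar>y\<bar> * (pi * (1 - y\<^sup>2))) \<partial>lborel) = ennreal (pi/2)"
proof -
  let ?h = "\<lambda>y::real. ennreal (\<bar>y\<bar> * (pi * (1 - y\<^sup>2)))"
  have half: "(\<integral>\<^sup>+y. indicator {0..1} y * ?h y \<partial>lborel) = ennreal (pi/4)"
  proof -
    have "(\<integral>\<^sup>+y. indicator {0..1} y * ?h y \<partial>lborel) = (\<integral>\<^sup>+y\<in>{0..1}. ennreal (y * (pi * (1 - y\<^sup>2))) \<partial>lborel)"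
      by (intro nn_integral_cong) (auto simp: indicator_def)
    also have "\<dots> = ennreal ((pi * (1\<^sup>2/2) - pi * (1^4/4)) - (pi * (0\<^sup>2/2) - pi * (0^4/4)))"
    proof (rule nn_integral_FTC_Icc)
      fix t :: real
      assume "t \<in> {0..1}"
      then show "0 \<le> t * (pi * (1 - t\<^sup>2))"
        by (auto intro!: mult_nonneg_nonneg simp: power_le_one)
      show "((\<lambda>t. pi * (t\<^sup>2/2) - pi * (t^4/4)) has_real_derivative t * (pi * (1 - t\<^sup>2))) (at t)"
        by (auto intro!: derivative_eq_intros simp: algebra_simps power2_eq_square power3_eq_cube)
    qed auto
    finally show ?thesis
      by simp
  qed
  have "(\<integral>\<^sup>+y. indicator {-1..0} y * ?h y \<partial>lborel) = (\<integral>\<^sup>+y. indicator {0..1} y * ?h y \<partial>lborel)"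
    by (subst nn_integral_real_affine[of _ "-1" 0]) (auto simp: indicator_def intro!: nn_integral_cong)
  moreover have "(\<integral>\<^sup>+y. indicator {-1..1} y * ?h y \<partial>lborel)
      = (\<integral>\<^sup>+y. indicator {-1..0} y * ?h y + indicator {0..1} y * ?h y \<partial>lborel)"
    by (intro nn_integral_cong_AE AE_I[of _ _ "{0}"]) (auto simp: indicator_def)
  ultimately have "(\<integral>\<^sup>+y. indicator {-1..1} y * ?h y \<partial>lborel) = ennreal (pi/4) + ennreal (pi/4)"
    by (simp add: nn_integral_add half)
  then show ?thesis
    by (simp flip: ennreal_plus)
qed

lemma sqrt_add_square_le_1_iff:
  fixes y s :: real
  assumes "s \<ge> 0"
  shows "sqrt (y\<^sup>2 + s) \<le> 1 \<longleftrightarrow> y \<in> {-1..1} \<and> sqrt s \<le> sqrt (1 - y\<^sup>2)"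
proof -
  have "y\<^sup>2 \<le> 1 \<longleftrightarrow> y \<in> {-1..1}"
    by (auto simp: abs_square_le_1 abs_le_iff)
  with assms show ?thesis
    by auto
qed

lemma nn_integral_PiM_ball_slice:
  fixes A :: "'a set"
  assumes A: "finite A" "i \<notin> A"
  shows "(\<integral>\<^sup>+x. indicator {f. sqrt (\<Sum>j\<in>insert i A. (f j)\<^sup>2) \<le> 1} (x(i := y)) * ennreal \<bar>y\<bar> \<partial>Pi\<^sub>M A (\<lambda>_. lborel))
       = ennreal \<bar>y\<bar> * indicator {-1..1} y
         * emeasure (Pi\<^sub>M A (\<lambda>_. lborel)) ({f. sqrt (\<Sum>j\<in>A. (f j)\<^sup>2) \<le> sqrt (1 - y\<^sup>2)} \<inter> space (Pi\<^sub>M A (\<lambda>_. lborel)))"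
proof -
  let ?M = "Pi\<^sub>M A (\<lambda>_. lborel)"
  let ?disc = "{f. sqrt (\<Sum>j\<in>A. (f j)\<^sup>2) \<le> sqrt (1 - y\<^sup>2)} \<inter> space ?M"
  have "(\<integral>\<^sup>+x. indicator {f. sqrt (\<Sum>j\<in>insert i A. (f j)\<^sup>2) \<le> 1} (x(i := y)) * ennreal \<bar>y\<bar> \<partial>?M)
      = (\<integral>\<^sup>+x. (ennreal \<bar>y\<bar> * indicator {-1..1} y) * indicator ?disc x \<partial>?M)"
  proof (rule nn_integral_cong)
    fix x :: "'a \<Rightarrow> real"
    assume x: "x \<in> space ?M"
    have "(\<Sum>j\<in>insert i A. ((x(i := y)) j)\<^sup>2) = y\<^sup>2 + (\<Sum>j\<in>A. (x j)\<^sup>2)"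
      using A by (simp add: sum.insert) (intro sum.cong, auto)
    then show "indicator {f. sqrt (\<Sum>j\<in>insert i A. (f j)\<^sup>2) \<le> 1} (x(i := y)) * ennreal \<bar>y\<bar>
        = (ennreal \<bar>y\<bar> * indicator {-1..1} y) * indicator ?disc x"
      using x sqrt_add_square_le_1_iff[of "\<Sum>j\<in>A. (x j)\<^sup>2" y] by (simp add: sum_nonneg indicator_def)
  qed
  then show ?thesis
    by (simp add: nn_integral_cmult)
qed

lemma nn_integral_PiM_ball_abs:
  fixes A :: "'a set"
  assumes A: "finite A" "i \<notin> A"
  shows "(\<integral>\<^sup>+f. indicator {f. sqrt (\<Sum>j\<in>insert i A. (f j)\<^sup>2) \<le> 1} f * ennreal \<bar>f i\<bar> \<partial>Pi\<^sub>M (insert i A) (\<lambda>_. lborel))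
       = (\<integral>\<^sup>+y. indicator {-1..1} y * ennreal (\<bar>y\<bar> * (unit_ball_vol (card A) * sqrt (1 - y\<^sup>2) ^ card A)) \<partial>lborel)"
proof -
  interpret product_sigma_finite "\<lambda>_. lborel"
    by standard
  let ?M = "Pi\<^sub>M A (\<lambda>_. lborel)"
  let ?disc = "\<lambda>r. {f. sqrt (\<Sum>j\<in>A. (f j)\<^sup>2) \<le> r} \<inter> space ?M"
  have "(\<integral>\<^sup>+f. indicator {f. sqrt (\<Sum>j\<in>insert i A. (f j)\<^sup>2) \<le> 1} f * ennreal \<bar>f i\<bar> \<partial>Pi\<^sub>M (insert i A) (\<lambda>_. lborel))
      = (\<integral>\<^sup>+y. \<integral>\<^sup>+x. indicator {f. sqrt (\<Sum>j\<in>insert i A. (f j)\<^sup>2) \<le> 1} (x(i := y)) * ennreal \<bar>y\<bar> \<partial>?M \<partial>lborel)"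
    using product_nn_integral_insert_rev[OF A,
        of "\<lambda>f. indicator {f. sqrt (\<Sum>j\<in>insert i A. (f j)\<^sup>2) \<le> 1} f * ennreal \<bar>f i\<bar>"]
    by simp
  also have "\<dots> = (\<integral>\<^sup>+y. ennreal \<bar>y\<bar> * indicator {-1..1} y * emeasure ?M (?disc (sqrt (1 - y\<^sup>2))) \<partial>lborel)"
    by (intro nn_integral_cong) (rule nn_integral_PiM_ball_slice[OF A])
  also have "\<dots> = (\<integral>\<^sup>+y. indicator {-1..1} y * ennreal (\<bar>y\<bar> * (unit_ball_vol (card A) * sqrt (1 - y\<^sup>2) ^ card A)) \<partial>lborel)"
  proof (rule nn_integral_cong_AE)
    have "AE y in lborel. y \<notin> {-1,1}"
      by (intro AE_not_in countable_imp_null_set_lborel) auto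
    then show "AE y in lborel. ennreal \<bar>y\<bar> * indicator {-1..1} y * emeasure ?M (?disc (sqrt (1 - y\<^sup>2)))
        = indicator {-1..1} y * ennreal (\<bar>y\<bar> * (unit_ball_vol (card A) * sqrt (1 - y\<^sup>2) ^ card A))"
    proof eventually_elim
      case (elim y)
      show ?case
      proof (cases "y \<in> {-1<..<1}")
        case True
        then have "y\<^sup>2 < 1"
          by (auto simp: abs_square_less_1)
        with True show ?thesis
          using emeasure_cball_aux[OF A(1), of "sqrt (1 - y\<^sup>2)"]
          by (simp add: indicator_def ennreal_mult' abs_mult)
      qed (use elim in \<open>auto simp: indicator_def\<close>)
    qed
  qed
  finally show ?thesis .
qed

lemma nn_integral_cball_abs_nth:
  "(\<integral>\<^sup>+x. indicator (cball (0::real^3) 1) x * ennreal \<bar>x$k\<bar> \<partial>lborel) = ennreal (pi/2)"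
proof -
  define i :: "real^3" where "i = axis k 1"
  define A where "A = Basis - {i}"
  have i: "i \<in> Basis"
    by (simp add: i_def axis_in_Basis_iff Basis_real_def)
  then have Basis: "Basis = insert i A" "i \<notin> A" "finite A" "card A = 2"
    by (auto simp: A_def card_Diff_singleton_if)
  have "(\<integral>\<^sup>+x. indicator (cball (0::real^3) 1) x * ennreal \<bar>x$k\<bar> \<partial>lborel)
      = (\<integral>\<^sup>+f. indicator (cball 0 1) (\<Sum>b\<in>Basis. f b *\<^sub>R b) * ennreal \<bar>(\<Sum>b\<in>Basis. f b *\<^sub>R b :: real^3) $ k\<bar>
           \<partial>Pi\<^sub>M Basis (\<lambda>_. lborel))"
    by (subst lborel_eq) (rule nn_integral_distr; measurable)
  also have "\<dots> = (\<integral>\<^sup>+f. indicator {f. sqrt (\<Sum>j\<in>insert i A. (f j)\<^sup>2) \<le> 1} f * ennreal \<bar>f i\<bar> \<partial>Pi\<^sub>M (insert i A) (\<lambda>_. lborel))"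
  proof (unfold Basis(1)[symmetric], rule nn_integral_cong)
    fix f :: "real^3 \<Rightarrow> real"
    have "(\<Sum>b\<in>Basis. f b *\<^sub>R b) $ k = f i"
      unfolding cart_eq_inner_axis i_def[symmetric] using i by (rule inner_sum_left_Basis)
    moreover have "norm (\<Sum>b\<in>Basis. f b *\<^sub>R b :: real^3) = sqrt (\<Sum>j\<in>Basis. (f j)\<^sup>2)"
      using euclidean_dist_l2[of 0 "\<Sum>b\<in>Basis. f b *\<^sub>R b :: real^3"]
      by (simp add: L2_set_def inner_sum_left_Basis)
    ultimately show "indicator (cball 0 1) (\<Sum>b\<in>Basis. f b *\<^sub>R b) * ennreal \<bar>(\<Sum>b\<in>Basis. f b *\<^sub>R b :: real^3) $ k\<bar>
        = indicator {f. sqrt (\<Sum>j\<in>Basis. (f j)\<^sup>2) \<le> 1} f * ennreal \<bar>f i\<bar>"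
      by (simp add: mem_cball_0 indicator_def)
  qed
  also have "\<dots> = (\<integral>\<^sup>+y. indicator {-1..1} y * ennreal (\<bar>y\<bar> * (pi * (1 - y\<^sup>2))) \<partial>lborel)"
    unfolding nn_integral_PiM_ball_abs[OF Basis(3,2)] Basis(4)
    by (intro nn_integral_cong) (simp add: eval_unit_ball_vol indicator_def abs_square_le_1 abs_le_iff)
  also have "\<dots> = ennreal (pi/2)"
    by (rule nn_integral_abs_mult_one_minus_square)
  finally show ?thesis .
qed

lemma nn_integral_unit_cball: "(\<integral>\<^sup>+x. indicator (cball (0::real^3) 1) x \<partial>lborel) = ennreal (4/3 * pi)"
  using emeasure_cball[of 1 "0::real^3"] by (simp add: unit_ball_vol_3)

lemma nn_integral_cball_abs_nth_divide_norm:
  "(\<integral>\<^sup>+x. indicator (cball (0::real^3) 1) x * ennreal (\<bar>x$k\<bar> / norm x) \<partial>lborel) = ennreal (2/3 * pi)"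
proof -
  let ?g = "\<lambda>x::real^3. ennreal (\<bar>x$k\<bar> / norm x)"
  let ?I = "\<integral>\<^sup>+x. indicator (cball (0::real^3) 1) x * ?g x \<partial>lborel"
  have hom: "?g (c *\<^sub>R x) = ?g x" if "c > 0" for c x
    using that by (simp add: abs_mult)
  have "?I \<le> (\<integral>\<^sup>+x. indicator (cball (0::real^3) 1) x \<partial>lborel)"
  proof (rule nn_integral_mono)
    fix x :: "real^3"
    have "\<bar>x$k\<bar> / norm x \<le> 1"
      using component_le_norm_cart[of x k] by (cases "x = 0") (auto simp: divide_le_eq_1)
    then show "indicator (cball 0 1) x * ?g x \<le> indicator (cball 0 1) x"
      by (auto simp: indicator_def ennreal_le_1)
  qed
  then have "?I \<noteq> top"
    by (auto simp: nn_integral_unit_cball top_unique)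
  then obtain P where P: "?I = ennreal P" "P \<ge> 0"
    by (cases ?I) auto
  have "ennreal (3/4 * P) = (\<integral>\<^sup>+x. indicator (cball (0::real^3) 1) x * ennreal (norm x) * ?g x \<partial>lborel)"
    using nn_integral_cball_norm_mult[OF _ hom P] by simp
  also have "\<dots> = (\<integral>\<^sup>+x. indicator (cball (0::real^3) 1) x * ennreal \<bar>x$k\<bar> \<partial>lborel)"
    by (intro nn_integral_cong) (simp add: mult.assoc ennreal_mult'[symmetric])
  also have "\<dots> = ennreal (pi/2)"
    by (rule nn_integral_cball_abs_nth)
  finally have "P = 2/3 * pi"
    using P(2) by (subst (asm) ennreal_inj) auto
  with P(1) show ?thesis
    by simp
qed

section \<open>Integrals over the sphere\<close>

lemma AE_lborel_not_sphere: "AE x in lborel. (x::'a::euclidean_space) \<notin> sphere 0 1"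
proof -
  have "sphere (0::'a) 1 \<in> sets borel"
    by (simp add: borel_closed)
  then have "sphere (0::'a) 1 \<in> null_sets lborel"
    using negligible_sphere[of "0::'a" 1] by (simp add: negligible_iff_null_sets null_sets_completion_iff)
  then show ?thesis
    by (rule AE_not_in)
qed

lemma has_bochner_integral_S2_measure:
  fixes g :: "real^3 \<Rightarrow> real"
  assumes g [measurable]: "g \<in> borel_measurable borel" and g_nonneg: "\<And>x. g x \<ge> 0"
    and I: "(\<integral>\<^sup>+x. indicator (cball 0 1) x * ennreal (g (x /\<^sub>R norm x)) \<partial>lborel) = ennreal r" "r \<ge> 0"
  shows "has_bochner_integral S2_measure g (3 * r)"
proof -
  let ?\<Omega> = "ball (0::real^3) 1 - {0}"
  let ?proj = "\<lambda>x::real^3. x /\<^sub>R norm x"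
  have [measurable]: "ball (0::real^3) 1 \<in> sets borel" "{0::real^3} \<in> sets borel"
    by simp_all
  have proj [measurable]: "?proj \<in> measurable (restrict_space lborel ?\<Omega>) borel"
    by (rule measurable_restrict_space1) measurable
  have \<Omega>: "?\<Omega> \<inter> space lborel \<in> sets lborel"
    by simp
  have "(\<integral>\<^sup>+x. ennreal (indicator ?\<Omega> x *\<^sub>R (3 *\<^sub>R g (?proj x))) \<partial>lborel)
      = (\<integral>\<^sup>+x. 3 * (indicator (cball 0 1) x * ennreal (g (?proj x))) \<partial>lborel)"
    using AE_lborel_not_sphere AE_lborel_singleton[of 0]
    by (rule nn_integral_cong_AE[OF eventually_rev_mp[OF _ eventually_mono]])
      (auto simp: indicator_def ennreal_mult' g_nonneg mem_ball_0 mem_cball_0 less_eq_real_def)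
  also have "\<dots> = ennreal (3 * r)"
    using I by (subst nn_integral_cmult) (simp_all add: ennreal_mult)
  finally have nn: "(\<integral>\<^sup>+x. ennreal (indicator ?\<Omega> x *\<^sub>R (3 *\<^sub>R g (?proj x))) \<partial>lborel) = ennreal (3 * r)" .
  have "has_bochner_integral (restrict_space lborel ?\<Omega>) (\<lambda>x. 3 *\<^sub>R g (?proj x)) (3 * r)"
    unfolding has_bochner_integral_restrict_space[OF \<Omega>]
    by (rule has_bochner_integral_nn_integral) (measurable, use g_nonneg I nn in auto)
  then have "has_bochner_integral (distr (restrict_space lborel ?\<Omega>) borel ?proj) (\<lambda>x. 3 *\<^sub>R g x) (3 * r)"
    by (intro has_bochner_integral_distr[OF _ proj]) simp_all
  then have "has_bochner_integral (density (distr (restrict_space lborel ?\<Omega>) borel ?proj) (\<lambda>_. ennreal 3)) g (3 * r)"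
    by (intro has_bochner_integral_density) simp_all
  then show ?thesis
    by (simp add: S2_measure_def)
qed

lemma scaleR_mem_octant: "c > 0 \<Longrightarrow> c *\<^sub>R x \<in> octant s \<longleftrightarrow> x \<in> octant s"
  by (simp add: mem_octant sgnp_def zero_le_mult_iff)

lemma divide_norm_mem_octant: "x /\<^sub>R norm x \<in> octant s \<longleftrightarrow> x \<in> octant s"
  by (cases "x = 0") (simp_all add: scaleR_mem_octant)

lemma has_bochner_integral_S2_octant:
  assumes "s \<in> sign_vectors"
  shows "has_bochner_integral S2_measure (indicator (octant s)) (pi/2)"
proof -
  have "8 * (\<integral>\<^sup>+x. indicator (octant s) x * indicator (cball (0::real^3) 1) x \<partial>lborel)
      = (\<integral>\<^sup>+x. indicator (cball (0::real^3) 1) x \<partial>lborel)"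
    by (rule nn_integral_octant[OF assms]) (simp_all add: indicator_def mem_cball_0 norm_sign_flip)
  also have "\<dots> = 8 * ennreal (pi/6)"
    by (simp add: nn_integral_unit_cball flip: ennreal_numeral ennreal_mult)
  finally have "(\<integral>\<^sup>+x. indicator (octant s) x * indicator (cball (0::real^3) 1) x \<partial>lborel) = ennreal (pi/6)"
    by (simp add: ennreal_mult_cancel_left)
  moreover have "(\<integral>\<^sup>+x. indicator (cball 0 1) x * ennreal (indicator (octant s) (x /\<^sub>R norm x)) \<partial>lborel)
      = (\<integral>\<^sup>+x. indicator (octant s) x * indicator (cball (0::real^3) 1) x \<partial>lborel)"
    by (intro nn_integral_cong) (simp add: divide_norm_mem_octant indicator_def)
  ultimately have "(\<integral>\<^sup>+x. indicator (cball 0 1) x * ennreal (indicator (octant s) (x /\<^sub>R norm x)) \<partial>lborel) = ennreal (pi/6)"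
    by simp
  from has_bochner_integral_S2_measure[OF _ _ this] show ?thesis
    by simp
qed

lemma has_bochner_integral_S2_octant_abs_nth:
  assumes "s \<in> sign_vectors"
  shows "has_bochner_integral S2_measure (\<lambda>l. indicator (octant s) l * \<bar>l$k\<bar>) (pi/4)"
proof -
  let ?w = "\<lambda>x::real^3. indicator (cball 0 1) x * ennreal (\<bar>x$k\<bar> / norm x)"
  have "8 * (\<integral>\<^sup>+x. indicator (octant s) x * ?w x \<partial>lborel) = (\<integral>\<^sup>+x. ?w x \<partial>lborel)"
    by (rule nn_integral_octant[OF assms])
      (simp_all add: indicator_def mem_cball_0 norm_sign_flip abs_nth_sign_vector abs_mult)
  also have "\<dots> = 8 * ennreal (pi/12)"
    by (simp add: nn_integral_cball_abs_nth_divide_norm flip: ennreal_numeral ennreal_mult)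
  finally have "(\<integral>\<^sup>+x. indicator (octant s) x * ?w x \<partial>lborel) = ennreal (pi/12)"
    by (simp add: ennreal_mult_cancel_left)
  moreover have "(\<integral>\<^sup>+x. indicator (cball 0 1) x * ennreal (indicator (octant s) (x /\<^sub>R norm x) * \<bar>(x /\<^sub>R norm x)$k\<bar>) \<partial>lborel)
      = (\<integral>\<^sup>+x. indicator (octant s) x * ?w x \<partial>lborel)"
    by (intro nn_integral_cong) (simp add: divide_norm_mem_octant indicator_def divide_inverse_commute abs_mult)
  ultimately have "(\<integral>\<^sup>+x. indicator (cball 0 1) x * ennreal (indicator (octant s) (x /\<^sub>R norm x) * \<bar>(x /\<^sub>R norm x)$k\<bar>) \<partial>lborel)
      = ennreal (pi/12)"
    by simp
  from has_bochner_integral_S2_measure[OF _ _ this] show ?thesis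
    by simp
qed

lemma has_bochner_integral_S2_octant_nth:
  assumes s: "s \<in> sign_vectors"
  shows "has_bochner_integral S2_measure (\<lambda>l. indicator (octant s) l * l$k) (s$k * (pi/4))"
proof -
  have "s$k * (indicator (octant s) l * \<bar>l$k\<bar>) = indicator (octant s) l * l$k" for l :: "real^3"
  proof (cases "l \<in> octant s")
    case True
    then have "s$k = sgnp (l$k)"
      by (simp add: mem_octant)
    then show ?thesis
      using True by (simp add: sgnp_def)
  qed simp
  with has_bochner_integral_mult_right[OF has_bochner_integral_S2_octant_abs_nth[OF s, of k], of "s$k"]
  show ?thesis
    by simp
qed

lemma has_bochner_integral_S2_octant_bloch:
  assumes s: "s \<in> sign_vectors"
  shows "has_bochner_integral S2_measure (\<lambda>l. indicator (octant s) l *\<^sub>R ((1 / (4 * pi)) *\<^sub>R (id2 + pauli_dot l)))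
           ((1/8) *\<^sub>R id2 + (1/16) *\<^sub>R pauli_dot s)"
proof -
  let ?O = "indicator (octant s) :: real^3 \<Rightarrow> real"
  have "has_bochner_integral S2_measure
      (\<lambda>l. (?O l / (4*pi)) *\<^sub>R id2 + (?O l * l$1 / (4*pi)) *\<^sub>R pauli_x
          + (?O l * l$2 / (4*pi)) *\<^sub>R pauli_y + (?O l * l$3 / (4*pi)) *\<^sub>R pauli_z)
      (((pi/2) / (4*pi)) *\<^sub>R id2 + ((s$1 * (pi/4)) / (4*pi)) *\<^sub>R pauli_x
          + ((s$2 * (pi/4)) / (4*pi)) *\<^sub>R pauli_y + ((s$3 * (pi/4)) / (4*pi)) *\<^sub>R pauli_z)"
    by (intro has_bochner_integral_add has_bochner_integral_scaleR_left has_bochner_integral_divide_zero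
        has_bochner_integral_S2_octant has_bochner_integral_S2_octant_nth s)
  then show ?thesis
    by (simp add: pauli_dot_def algebra_simps)
qed

section \<open>The response functions\<close>

lemma sgnvec_sgnvec: "sgnvec (sgnvec l) = sgnvec l"
  by (simp add: sgnvec_def sgnp_def)

lemma pcond_sgnvec: "pcond n p a i (sgnvec l) = pcond n p a i l"
  by (simp add: pcond_def sgnvec_sgnvec)

text \<open>The case distinction in \<open>pcond\<close> can be dropped: when \<open>\<Sum>\<^sub>j \<alpha>\<^sub>j = 0\<close> the quotient
  is \<open>0\<close> anyway, because \<open>x / 0 = 0\<close>.\<close>

lemma pcond_vs:
  assumes "x \<in> {-1,1}" "y \<in> {-1,1}" "z \<in> {-1,1}"
  shows "pcond n p a i (vs x y z) = p i * Theta (a i \<bullet> vs x y z)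
     + (1 - f_fun n p a (vs x y z)) * alpha p a i / (\<Sum>j<n. alpha p a j)"
  by (simp add: pcond_def Let_def sgnvec_vs[OF assms])

lemma f_fun_eq: "f_fun n p a v = (\<Sum>j<n. p j * Theta (a j \<bullet> v))"
  by (simp add: f_fun_def inner_commute)

locale qubit_lhv =
  fixes n :: nat and p :: "nat \<Rightarrow> real" and a :: "nat \<Rightarrow> real^3"
  assumes p_nonneg: "\<And>i. i < n \<Longrightarrow> p i \<ge> 0"
    and a_unit: "\<And>i. i < n \<Longrightarrow> norm (a i) = 1"
    and p_sum: "(\<Sum>i<n. p i) = 2"
    and p_a_sum: "(\<Sum>i<n. p i *\<^sub>R a i) = 0"
    and f_le: "\<And>sx sy sz. sx \<in> {-1,1} \<Longrightarrow> sy \<in> {-1,1} \<Longrightarrow> sz \<in> {-1,1} \<Longrightarrow>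
                 f_fun n p a (vs sx sy sz) \<le> 1"
begin

abbreviation alpha_total :: real where
  "alpha_total \<equiv> \<Sum>j<n. alpha p a j"

lemma alpha_nonneg: "i < n \<Longrightarrow> alpha p a i \<ge> 0"
  using p_nonneg[of i] sum_signs_Theta_inner_le[OF a_unit, of i] by (simp add: alpha_def)

lemma alpha_total_nonneg: "alpha_total \<ge> 0"
  by (rule sum_nonneg) (simp add: alpha_nonneg)

lemma sum_signs_f_fun: "sum_signs (\<lambda>x y z. f_fun n p a (vs x y z)) = 8 - 8 * alpha_total"
proof -
  let ?T = "\<lambda>j. sum_signs (\<lambda>x y z. Theta (a j \<bullet> vs x y z))"
  have "sum_signs (\<lambda>x y z. f_fun n p a (vs x y z)) = (\<Sum>j<n. p j * ?T j)"
    by (simp add: f_fun_eq sum_signs_swap_sum sum_signs_mult_left)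
  also have "\<dots> = 8 - 8 * alpha_total"
    by (simp add: alpha_def p_sum sum_distrib_left sum_subtractf algebra_simps flip: sum_divide_distrib)
  finally show ?thesis .
qed

lemma sum_signs_f_fun_scaleR_vs: "sum_signs (\<lambda>x y z. f_fun n p a (vs x y z) *\<^sub>R vs x y z) = 0"
proof -
  have "sum_signs (\<lambda>x y z. f_fun n p a (vs x y z) *\<^sub>R vs x y z)
      = (\<Sum>j<n. sum_signs (\<lambda>x y z. p j *\<^sub>R (Theta (a j \<bullet> vs x y z) *\<^sub>R vs x y z)))"
    by (simp only: f_fun_eq scaleR_sum_left sum_signs_swap_sum scaleR_scaleR)
  also have "\<dots> = 4 *\<^sub>R (\<Sum>j<n. p j *\<^sub>R a j)"
    by (simp add: sum_signs_scaleR_right sum_signs_Theta_inner_scaleR scaleR_sum_right del: scaleR_scaleR)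
      (simp add: algebra_simps)
  finally show ?thesis
    by (simp add: p_a_sum)
qed

lemma f_fun_eq_1:
  assumes "alpha_total = 0" and "x \<in> {-1,1}" "y \<in> {-1,1}" "z \<in> {-1,1}"
  shows "f_fun n p a (vs x y z) = 1"
proof -
  have "sum_signs (\<lambda>x y z. f_fun n p a (vs x y z)) = 8"
    using assms(1) by (simp add: sum_signs_f_fun)
  moreover note f_le[of 1 1 1] f_le[of 1 1 "-1"] f_le[of 1 "-1" 1] f_le[of 1 "-1" "-1"]
    f_le[of "-1" 1 1] f_le[of "-1" 1 "-1"] f_le[of "-1" "-1" 1] f_le[of "-1" "-1" "-1"]
  ultimately show ?thesis
    using assms(2-4) unfolding sum_signs_expand by auto
qed

lemma pcond_nonneg:
  assumes "i < n"
  shows "pcond n p a i l \<ge> 0"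
proof -
  have "f_fun n p a (sgnvec l) \<le> 1"
    unfolding sgnvec_def by (intro f_le sgnp_in)
  then show ?thesis
    unfolding pcond_def Let_def
    using p_nonneg[OF assms] alpha_nonneg[OF assms] alpha_total_nonneg Theta_nonneg
    by (simp add: divide_nonneg_nonneg)
qed

lemma sum_pcond: "(\<Sum>i<n. pcond n p a i l) = 1"
proof (cases "alpha_total = 0")
  case True
  then show ?thesis
    unfolding pcond_def Let_def sgnvec_def
    by (simp add: f_fun_eq[symmetric] f_fun_eq_1[OF True sgnp_in sgnp_in sgnp_in])
next
  case False
  then show ?thesis
    by (simp add: pcond_def Let_def sum.distrib f_fun_eq[symmetric]
        flip: sum_divide_distrib sum_distrib_left)
qed

lemma alpha_eq_0: "alpha_total = 0 \<Longrightarrow> i < n \<Longrightarrow> alpha p a i = 0"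
  using sum_nonneg_eq_0_iff[of "{..<n}" "alpha p a"] alpha_nonneg by auto

lemma sum_signs_pcond_scaleR_G:
  assumes i: "i < n"
  shows "sum_signs (\<lambda>x y z. pcond n p a i (vs x y z) *\<^sub>R G x y z) = A_half p a i"
proof -
  let ?c = "\<lambda>x y z. 1 - f_fun n p a (vs x y z)"
  have "sum_signs (\<lambda>x y z. pcond n p a i (vs x y z) *\<^sub>R G x y z)
      = sum_signs (\<lambda>x y z. (p i * Theta (a i \<bullet> vs x y z)) *\<^sub>R G x y z
          + (alpha p a i / alpha_total) *\<^sub>R (?c x y z *\<^sub>R G x y z))"
    by (rule sum_signs_cong) (simp add: pcond_vs scaleR_add_left)
  also have "\<dots> = sum_signs (\<lambda>x y z. (p i * Theta (a i \<bullet> vs x y z)) *\<^sub>R G x y z)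
        + (alpha p a i / alpha_total) *\<^sub>R sum_signs (\<lambda>x y z. ?c x y z *\<^sub>R G x y z)"
    by (simp only: sum_signs_add sum_signs_scaleR_right)
  also have "sum_signs (\<lambda>x y z. ?c x y z *\<^sub>R G x y z) = alpha_total *\<^sub>R id2"
  proof -
    have "sum_signs ?c = 8 * alpha_total"
      by (simp add: sum_signs_diff sum_signs_f_fun)
    moreover have "sum_signs (\<lambda>x y z. ?c x y z *\<^sub>R vs x y z) = 0"
      by (simp add: scaleR_diff_left sum_signs_diff sum_signs_f_fun_scaleR_vs)
    ultimately show ?thesis
      by (simp add: sum_signs_scaleR_G linear_0[OF linear_pauli_dot])
  qed
  finally show ?thesis
    using alpha_eq_0[OF _ i] by (cases "alpha_total = 0") (simp_all add: sum_signs_Theta_scaleR_G)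
qed

lemma has_bochner_integral_pcond:
  assumes i: "i < n"
  shows "has_bochner_integral S2_measure
           (\<lambda>l. pcond n p a i l *\<^sub>R ((1 / (4 * pi)) *\<^sub>R (id2 + pauli_dot l))) (A_half p a i)"
proof -
  let ?K = "\<lambda>l. (1 / (4 * pi)) *\<^sub>R (id2 + pauli_dot l)"
  have "pcond n p a i l *\<^sub>R ?K l
      = sum_signs (\<lambda>x y z. pcond n p a i (vs x y z) *\<^sub>R (indicator (octant (vs x y z)) l *\<^sub>R ?K l))" for l
  proof -
    have "sum_signs (\<lambda>x y z. pcond n p a i (vs x y z) *\<^sub>R (indicator (octant (vs x y z)) l *\<^sub>R ?K l))
        = sum_signs (\<lambda>x y z. indicator (octant (vs x y z)) l *\<^sub>R (pcond n p a i (vs x y z) *\<^sub>R ?K l))"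
      by (simp only: scaleR_left_commute)
    also have "\<dots> = pcond n p a i l *\<^sub>R ?K l"
      by (simp only: sum_signs_indicator_octant_scaleR sgnvec_def[symmetric] pcond_sgnvec)
    finally show ?thesis ..
  qed
  moreover have "has_bochner_integral S2_measure
      (\<lambda>l. sum_signs (\<lambda>x y z. pcond n p a i (vs x y z) *\<^sub>R (indicator (octant (vs x y z)) l *\<^sub>R ?K l)))
      (sum_signs (\<lambda>x y z. pcond n p a i (vs x y z) *\<^sub>R G x y z))"
    unfolding G_def
    by (intro has_bochner_integral_sum_signs has_bochner_integral_scaleR_right
        has_bochner_integral_S2_octant_bloch vs_in_sign_vectors)
  ultimately show ?thesis
    by (simp add: sum_signs_pcond_scaleR_G[OF i])
qed

end

theorem mainTheorem7:
  fixes n :: nat and p :: "nat \<Rightarrow> real" and a :: "nat \<Rightarrow> real^3"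
  assumes p_nonneg: "\<And>i. i < n \<Longrightarrow> p i \<ge> 0"
    and a_unit: "\<And>i. i < n \<Longrightarrow> norm (a i) = 1"
    and p_sum: "(\<Sum>i<n. p i) = 2"
    and p_a_sum: "(\<Sum>i<n. p i *\<^sub>R a i) = 0"
    and f_le: "\<And>sx sy sz. sx \<in> {-1,1} \<Longrightarrow> sy \<in> {-1,1} \<Longrightarrow> sz \<in> {-1,1} \<Longrightarrow>
                 f_fun n p a (vs sx sy sz) \<le> 1"
  shows "(\<forall>i<n. alpha p a i \<ge> 0)
    \<and> (\<forall>i<n. \<forall>l\<in>sphere 0 1. pcond n p a i l \<ge> 0)
    \<and> (\<forall>l\<in>sphere 0 1. (\<Sum>i<n. pcond n p a i l) = 1)
    \<and> (\<forall>i<n. has_bochner_integral S2_measure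
           (\<lambda>l. pcond n p a i l *\<^sub>R ((1 / (4 * pi)) *\<^sub>R (id2 + pauli_dot l))) (A_half p a i))
    \<and> (\<forall>i<n. sum_signs (\<lambda>sx sy sz. (p i * Theta (a i \<bullet> vs sx sy sz)) *\<^sub>R G sx sy sz)
           = A_half p a i - alpha p a i *\<^sub>R id2)"
proof -
  interpret qubit_lhv n p a
    by unfold_locales (fact assms)+
  show ?thesis
    using alpha_nonneg pcond_nonneg sum_pcond has_bochner_integral_pcond sum_signs_Theta_scaleR_G
    by blast
qed

end
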